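(* Let $S$ be a weakly cancellative $\mathrm{Cu}$-semigroup satisfying (O5) and (O6). Then $S$ satisfies (O8).
   Context: A $\mathrm{Cu}$-semigroup is a positively ordered abelian monoid $S$ such that: (O1) every increasing sequence has a supremum; (O2) every $x$ is the supremum of a $\ll$-increasing sequence; (O3) $x'\ll x$, $y'\ll y$ imply $x'+y'\ll x+y$; (O4) $\sup_n(x_n+y_n)=\sup_nx_n+\sup_ny_n$ for increasing sequences. Here $x\ll y$ means: for every increasing sequence $(y_k)$ with $y\le\sup_ky_k$ there is $k$ with $x\le y_k$. (O5): given $x+y\le z$, $x'\ll x$, $y'\ll y$, there is $c$ with $x'+c\le z\le x+c$ and $y'\ll c$. (O6): given $x'\ll x\le y+z$, there are $e,f$ with $x'\le e+f$, $e\le x,y$, $f\le x,z$. $S$ is weakly cancellative if $x+z\ll y+z$ implies $x\ll y$. (O8): for all $x',x,y',y,z,w$ with $2w=w$, $x+y\ll z+w$, $x'\ll x$, $y'\ll y$, there exist $z_1,z_2$ with $z_1+z_2\ll z$, $x'\ll z_1+w$, $y'\ll z_2+w$, $z_1\ll x+w$, $z_2\ll y+w$. *)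

theory Defs
  imports Main
begin

definition is_sup_seq :: "(nat \<Rightarrow> 'a::order) \<Rightarrow> 'a \<Rightarrow> bool" where
  "is_sup_seq f s \<longleftrightarrow> (\<forall>n. f n \<le> s) \<and> (\<forall>u. (\<forall>n. f n \<le> u) \<longrightarrow> s \<le> u)"

definition way_below :: "'a::order \<Rightarrow> 'a \<Rightarrow> bool" (infix "\<lless>" 50) where
  "x \<lless> y \<longleftrightarrow> (\<forall>f s. mono f \<longrightarrow> is_sup_seq f s \<longrightarrow> y \<le> s \<longrightarrow> (\<exists>k. x \<le> f k))"

definition positively_ordered :: "'a::ordered_comm_monoid_add itself \<Rightarrow> bool" where
  "positively_ordered _ \<longleftrightarrow> (\<forall>x::'a. 0 \<le> x)"

definition O1 :: "'a::ordered_comm_monoid_add itself \<Rightarrow> bool" where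
  "O1 _ \<longleftrightarrow> (\<forall>f::nat \<Rightarrow> 'a. mono f \<longrightarrow> (\<exists>s. is_sup_seq f s))"

definition O2 :: "'a::ordered_comm_monoid_add itself \<Rightarrow> bool" where
  "O2 _ \<longleftrightarrow> (\<forall>x::'a. \<exists>f. (\<forall>n. f n \<lless> f (Suc n)) \<and> is_sup_seq f x)"

definition O3 :: "'a::ordered_comm_monoid_add itself \<Rightarrow> bool" where
  "O3 _ \<longleftrightarrow> (\<forall>x' x y' y :: 'a. x' \<lless> x \<longrightarrow> y' \<lless> y \<longrightarrow> x' + y' \<lless> x + y)"

definition O4 :: "'a::ordered_comm_monoid_add itself \<Rightarrow> bool" where
  "O4 _ \<longleftrightarrow> (\<forall>(f::nat \<Rightarrow> 'a) g a b. mono f \<longrightarrow> mono g \<longrightarrow> is_sup_seq f a \<longrightarrow> is_sup_seq g b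
      \<longrightarrow> is_sup_seq (\<lambda>n. f n + g n) (a + b))"

definition Cu_semigroup :: "'a::ordered_comm_monoid_add itself \<Rightarrow> bool" where
  "Cu_semigroup T \<longleftrightarrow> positively_ordered T \<and> O1 T \<and> O2 T \<and> O3 T \<and> O4 T"

definition O5 :: "'a::ordered_comm_monoid_add itself \<Rightarrow> bool" where
  "O5 _ \<longleftrightarrow> (\<forall>x y z x' y' :: 'a. x + y \<le> z \<longrightarrow> x' \<lless> x \<longrightarrow> y' \<lless> y \<longrightarrow>
      (\<exists>c. x' + c \<le> z \<and> z \<le> x + c \<and> y' \<lless> c))"

definition O6 :: "'a::ordered_comm_monoid_add itself \<Rightarrow> bool" where
  "O6 _ \<longleftrightarrow> (\<forall>x' x y z :: 'a. x' \<lless> x \<longrightarrow> x \<le> y + z \<longrightarrow>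
      (\<exists>e f. x' \<le> e + f \<and> e \<le> x \<and> e \<le> y \<and> f \<le> x \<and> f \<le> z))"

definition weakly_cancellative :: "'a::ordered_comm_monoid_add itself \<Rightarrow> bool" where
  "weakly_cancellative _ \<longleftrightarrow> (\<forall>x y z :: 'a. x + z \<lless> y + z \<longrightarrow> x \<lless> y)"

definition O8 :: "'a::ordered_comm_monoid_add itself \<Rightarrow> bool" where
  "O8 _ \<longleftrightarrow> (\<forall>x' x y' y z w :: 'a. w + w = w \<longrightarrow> x + y \<lless> z + w \<longrightarrow> x' \<lless> x \<longrightarrow> y' \<lless> y \<longrightarrow>
      (\<exists>z1 z2. z1 + z2 \<lless> z \<and> x' \<lless> z1 + w \<and> y' \<lless> z2 + w \<and> z1 \<lless> x + w \<and> z2 \<lless> y + w))"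

end

theory Submission
  imports Defs
begin

text \<open>Cut down \<open>z\<close> to some \<open>z\<^sub>0 \<lless> z\<close> with \<open>x + y \<lless> z\<^sub>0 + w\<close>. By (O6) the part of \<open>x\<close>
lying below \<open>z\<^sub>0\<close> yields \<open>e\<close> with \<open>x' \<lless> e' + w\<close> for some \<open>e' \<lless> e\<close>, and (O5) gives a
complement \<open>c\<close> of \<open>e'\<close> in \<open>z\<^sub>0\<close>, i.e. \<open>e' + c \<le> z\<^sub>0 \<le> e + c\<close>. Then
\<open>y + e \<le> x + y \<lless> c + w + e\<close>, so weak cancellation gives \<open>y \<lless> c + w\<close>, and (O6) once more
produces \<open>g \<le> c\<close> with \<open>y' \<lless> g + w\<close>. Take \<open>z\<^sub>1 = e'\<close> and \<open>z\<^sub>2 = g\<close>.\<close>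

lemma way_below_imp_le: "(a::'a::order) \<lless> b \<Longrightarrow> a \<le> b"
proof -
  assume "a \<lless> b"
  moreover have "mono (\<lambda>_::nat. b)" "is_sup_seq (\<lambda>_::nat. b) b"
    by (simp_all add: mono_def is_sup_seq_def)
  ultimately show ?thesis unfolding way_below_def by blast
qed

lemma le_way_below_trans: "(a::'a::order) \<le> b \<Longrightarrow> b \<lless> c \<Longrightarrow> a \<lless> c"
  unfolding way_below_def by (meson order_trans)

lemma way_below_le_trans: "(a::'a::order) \<lless> b \<Longrightarrow> b \<le> c \<Longrightarrow> a \<lless> c"
  unfolding way_below_def by (meson order_trans)

lemma zero_way_below_zero:
  assumes "positively_ordered TYPE('a::ordered_comm_monoid_add)"
  shows "(0::'a) \<lless> 0"
  using assms unfolding way_below_def positively_ordered_def by blast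

lemma le_add_right_positive:
  assumes "positively_ordered TYPE('a::ordered_comm_monoid_add)"
  shows "(x::'a) \<le> x + y"
  using add_left_mono[of 0 y x] assms unfolding positively_ordered_def by simp

lemma O2_way_below_chain:
  assumes "O2 TYPE('a::ordered_comm_monoid_add)"
  obtains f where "\<And>n. f n \<lless> f (Suc n)" "\<And>n. f n \<lless> (b::'a)" "mono f" "is_sup_seq f b"
proof -
  obtain f where chain: "\<forall>n. f n \<lless> f (Suc n)" and sup: "is_sup_seq f b"
    using assms unfolding O2_def by blast
  have "mono f"
    using chain by (intro mono_iff_le_Suc[THEN iffD2]) (auto intro: way_below_imp_le)
  moreover have "f n \<lless> b" for n
    using chain sup way_below_le_trans unfolding is_sup_seq_def by blast
  ultimately show thesis using that chain sup by blast
qed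

lemma way_below_interpolate:
  assumes "O2 TYPE('a::ordered_comm_monoid_add)" and "(a::'a) \<lless> b"
  obtains c where "a \<lless> c" "c \<lless> b"
proof -
  obtain f where f: "\<And>n. f n \<lless> f (Suc n)" "\<And>n. f n \<lless> b" "mono f" "is_sup_seq f b"
    using O2_way_below_chain[OF assms(1)] by blast
  then obtain k where "a \<le> f k" using assms(2) unfolding way_below_def by blast
  then show thesis using that f le_way_below_trans by blast
qed

text \<open>By (O4) the sums \<open>f n + w\<close> of an O2-chain \<open>f\<close> for \<open>b\<close> have supremum \<open>b + w\<close>,
so an interpolant between \<open>a\<close> and \<open>b + w\<close> already lies below some \<open>f k + w\<close>.\<close>

lemma way_below_add_approx:
  assumes "O2 TYPE('a::ordered_comm_monoid_add)" "O4 TYPE('a)" and "(a::'a) \<lless> b + w"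
  obtains b' where "b' \<lless> b" "a \<lless> b' + w"
proof -
  obtain a1 where a1: "a \<lless> a1" "a1 \<lless> b + w"
    using way_below_interpolate[OF assms(1,3)] by blast
  obtain f where f: "\<And>n. f n \<lless> b" "mono f" "is_sup_seq f b"
    using O2_way_below_chain[OF assms(1)] by blast
  have "mono (\<lambda>_::nat. w)" "is_sup_seq (\<lambda>_::nat. w) w"
    by (simp_all add: mono_def is_sup_seq_def)
  then have "is_sup_seq (\<lambda>n. f n + w) (b + w)"
    using assms(2) f unfolding O4_def by blast
  moreover have "mono (\<lambda>n. f n + w)"
    using f(2) by (simp add: mono_def add_right_mono)
  ultimately obtain k where "a1 \<le> f k + w"
    using a1(2) unfolding way_below_def by blast
  then show thesis using that f(1) a1(1) way_below_le_trans by blast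
qed

lemma O6_way_below_decomp:
  assumes "O2 TYPE('a::ordered_comm_monoid_add)" "O6 TYPE('a)"
    and "(x'::'a) \<lless> x" "x \<le> y + z"
  obtains e where "e \<lless> x" "e \<le> y" "x' \<lless> e + z"
proof -
  obtain x2 where x2: "x' \<lless> x2" "x2 \<lless> x" using way_below_interpolate[OF assms(1,3)] .
  obtain x3 where x3: "x2 \<lless> x3" "x3 \<lless> x" using way_below_interpolate[OF assms(1) x2(2)] .
  have "x3 \<le> y + z" using way_below_imp_le[OF x3(2)] assms(4) by (rule order_trans)
  then obtain e f where ef: "x2 \<le> e + f" "e \<le> x3" "e \<le> y" "f \<le> z"
    using assms(2) x3(1) unfolding O6_def by blast
  have "x2 \<le> e + z" using ef(1) add_left_mono[OF ef(4)] by (rule order_trans)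
  then have "x' \<lless> e + z" using x2(1) way_below_le_trans by blast
  moreover have "e \<lless> x" using ef(2) x3(2) by (rule le_way_below_trans)
  ultimately show thesis using that ef(3) by blast
qed

lemma O5_complement:
  assumes "O5 TYPE('a::ordered_comm_monoid_add)" "positively_ordered TYPE('a)"
    and "(e::'a) \<le> z" "e' \<lless> e"
  obtains c where "e' + c \<le> z" "z \<le> e + c"
  using assms zero_way_below_zero[OF assms(2)] unfolding O5_def by (metis add_0_right)

theorem mainTheorem15:
  assumes "Cu_semigroup TYPE('a::ordered_comm_monoid_add)"
    and "weakly_cancellative TYPE('a)"
    and "O5 TYPE('a)"
    and "O6 TYPE('a)"
  shows "O8 TYPE('a)"
  unfolding O8_def
proof (intro allI impI)
  fix x' x y' y z w :: 'a
  assume xy: "x + y \<lless> z + w" and "x' \<lless> x" "y' \<lless> y"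
  have pos: "positively_ordered TYPE('a)" and O2: "O2 TYPE('a)" and O4: "O4 TYPE('a)"
    using assms(1) unfolding Cu_semigroup_def by auto
  obtain z0 where "z0 \<lless> z" and xy_z0: "x + y \<lless> z0 + w"
    using way_below_add_approx[OF O2 O4 xy] .
  have "x \<le> z0 + w"
    using le_add_right_positive[OF pos] way_below_imp_le[OF xy_z0] by (rule order_trans)
  then obtain e where "e \<lless> x" "e \<le> z0" "x' \<lless> e + w"
    using O6_way_below_decomp[OF O2 assms(4) \<open>x' \<lless> x\<close>] by blast
  then obtain e' where "e' \<lless> e" "x' \<lless> e' + w" using way_below_add_approx[OF O2 O4] by blast
  then obtain c where "e' + c \<le> z0" "z0 \<le> e + c"
    using O5_complement[OF assms(3) pos \<open>e \<le> z0\<close>] by blast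
  have "y + e \<le> x + y"
    using add_right_mono[OF way_below_imp_le[OF \<open>e \<lless> x\<close>], of y] by (simp add: add.commute)
  moreover have "z0 + w \<le> (c + w) + e"
    using add_right_mono[OF \<open>z0 \<le> e + c\<close>, of w] by (simp add: ac_simps)
  ultimately have "y + e \<lless> (c + w) + e"
    using xy_z0 le_way_below_trans way_below_le_trans by blast
  then have "y \<le> c + w" using assms(2) way_below_imp_le unfolding weakly_cancellative_def by blast
  then obtain g where "g \<lless> y" "g \<le> c" "y' \<lless> g + w"
    using O6_way_below_decomp[OF O2 assms(4) \<open>y' \<lless> y\<close>] by blast
  have "e' + g \<lless> z"
    using add_left_mono[OF \<open>g \<le> c\<close>] \<open>e' + c \<le> z0\<close> \<open>z0 \<lless> z\<close> by (meson order_trans le_way_below_trans)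
  moreover have "e' \<lless> x + w" "g \<lless> y + w"
    using \<open>e' \<lless> e\<close> \<open>e \<lless> x\<close> \<open>g \<lless> y\<close> le_add_right_positive[OF pos]
    by (meson way_below_imp_le way_below_le_trans order_trans)+
  ultimately show "\<exists>z1 z2. z1 + z2 \<lless> z \<and> x' \<lless> z1 + w \<and> y' \<lless> z2 + w \<and> z1 \<lless> x + w \<and> z2 \<lless> y + w"
    using \<open>x' \<lless> e' + w\<close> \<open>y' \<lless> g + w\<close> by blast
qed

end
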